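(* Let $q$ be an odd prime power with characteristic $p$, let $1\le n\le q^2-1$, and write $n=u+vq$ with $0\le u,v\le q-1$. Define \[ \mathrm{II}=\sum_{\substack{\alpha,\beta\ge 0,\ \beta\le q-2\\ 0<\alpha+\beta\le q-1}}\ \sum_{\substack{k\ge 1,\ j\ge 0\\ k+j\le q-1\\ 2k-j\equiv\alpha+\beta\pmod{q-1}\\ q(q-1)+k-j-(\alpha+\beta q)=n}}2^{\alpha+\beta}\binom{2(q-1)-\alpha-\beta}{q-1}\binom{q-1-k}{j}(-1)^j . \] Then in $\mathbb F_p$, \[ \mathrm{II}=\sum_{\substack{0\le s\le 2\\ \max\{0,\,v-s+\frac{u+v}{q-1}\}<\alpha\le\min\{q-1,\,v-s+\frac{u+v}{q-1}+1\}}}\binom{u+v-(s+\alpha-v-1)(q-1)}{(s+2\alpha-2v)(q-1)-2(u+v)}, \] the sum being over integers $s,\alpha$ in the indicated ranges.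
   Context: For integers $m\ge 0$ and $k$, $\binom mk$ is the usual binomial coefficient, equal to $0$ unless $0\le k\le m$; integers are interpreted in $\mathbb F_p$. *)

theory Defs
  imports Complex_Main "HOL-Number_Theory.Cong"
begin

definition binom :: "int \<Rightarrow> int \<Rightarrow> int" where
  "binom m k = (if 0 \<le> k \<and> k \<le> m then int (nat m choose nat k) else 0)"

end

theory Submission
  imports Defs "HOL-Number_Theory.Number_Theory"
begin

text \<open>
  Modulo \<open>p\<close> the factor \<open>binom (2(q-1)-\<alpha>-\<beta>) (q-1)\<close> vanishes unless \<open>\<alpha>+\<beta> = q-1\<close>,
  because by Vandermonde \<open>(q+c) choose (q-1)\<close> with \<open>c < q-1\<close> only involves \<open>q choose i\<close>
  with \<open>0 < i < q\<close>. On the diagonal \<open>\<alpha>+\<beta> = q-1\<close> we have \<open>2^(q-1) \<equiv> 1\<close>, and since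
  \<open>q-1\<close> is even and divides \<open>2k-j\<close>, the sign \<open>(-1)^j\<close> is \<open>1\<close>. What remains is a sum of
  \<open>binom (q-1-k) j\<close>; writing \<open>s = (2k-j)/(q-1) \<in> {0,1,2}\<close>, the pair \<open>(q-1-k, j)\<close> is exactly
  the pair of arguments of the closed-form binomial at \<open>(s, \<alpha>)\<close>, and this substitution is a
  bijection onto the pairs \<open>(s, \<alpha>)\<close> whose binomial is not trivially zero.
\<close>

lemma prime_dvd_choose_prime_power:
  fixes p e i :: nat
  assumes "prime p" "0 < i" "i < p ^ e"
  shows "p dvd (p ^ e choose i)"
proof (rule ccontr)
  assume nd: "\<not> p dvd (p ^ e choose i)"
  obtain m where m: "p ^ e = Suc m" using assms(3) by (cases "p ^ e") auto
  obtain l where l: "i = Suc l" using assms(2) by (cases i) auto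
  have "i * (p ^ e choose i) = p ^ e * (m choose l)"
    using Suc_times_binomial[of l m] by (simp add: m l)
  then have "p ^ e dvd i * (p ^ e choose i)" by simp
  moreover have "coprime (p ^ e) (p ^ e choose i)"
    using nd assms(1) by (simp add: prime_imp_coprime coprime_power_left_iff)
  ultimately have "p ^ e dvd i" using coprime_dvd_mult_left_iff by blast
  then show False using assms(2,3) by (simp add: dvd_imp_le leD)
qed

lemma prime_dvd_choose_prime_power_add:
  fixes p e a :: nat
  assumes "prime p" "a < p ^ e - 1"
  shows "p dvd ((p ^ e + a) choose (p ^ e - 1))"
proof -
  have "(p ^ e + a) choose (p ^ e - 1) = (\<Sum>i\<le>p ^ e - 1. (p ^ e choose i) * (a choose (p ^ e - 1 - i)))"
    by (rule vandermonde[symmetric])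
  also have "p dvd \<dots>"
  proof (rule dvd_sum)
    fix i assume i: "i \<in> {..p ^ e - 1}"
    show "p dvd (p ^ e choose i) * (a choose (p ^ e - 1 - i))"
    proof (cases "i = 0")
      case True
      then show ?thesis using assms(2) by (simp add: binomial_eq_0)
    next
      case False
      then have "p dvd (p ^ e choose i)"
        using i assms prime_dvd_choose_prime_power[OF assms(1), of i e] by auto
      then show ?thesis by simp
    qed
  qed
  finally show ?thesis .
qed

lemma fermat_theorem_prime_power:
  fixes p e a :: nat
  assumes "prime p" "\<not> p dvd a"
  shows "[a ^ (p ^ e - 1) = 1] (mod p)"
proof -
  have "[p = 1] (mod (p - 1))"
    using prime_gt_0_nat[OF assms(1)] by (simp add: cong_def le_mod_geq)
  then have "[p ^ e = 1 ^ e] (mod (p - 1))" by (rule cong_pow)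
  then have "(p - 1) dvd (p ^ e - 1)" unfolding power_one by (rule cong_to_1_nat)
  then obtain c where c: "p ^ e - 1 = (p - 1) * c" by blast
  have "[(a ^ (p - 1)) ^ c = 1 ^ c] (mod p)"
    by (rule cong_pow) (rule fermat_theorem[OF assms])
  then show ?thesis unfolding c power_mult by simp
qed

lemma binom_double_pred_cong:
  fixes p e q :: nat and m :: int
  assumes "prime p" "q = p ^ e" "0 < m" "m \<le> int q - 1"
  shows "[binom (2 * (int q - 1) - m) (int q - 1) = (if m = int q - 1 then 1 else 0)] (mod int p)"
proof (cases "m = int q - 1")
  case True
  then show ?thesis using assms(3) by (simp add: binom_def)
next
  case False
  define c where "c = nat (int q - 2 - m)"
  have top: "nat (2 * (int q - 1) - m) = q + c" and bot: "nat (int q - 1) = q - 1"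
    using assms(3,4) False by (simp_all add: c_def)
  have "c < q - 1" using assms(3,4) False unfolding c_def by linarith
  then have "p dvd ((q + c) choose (q - 1))"
    using prime_dvd_choose_prime_power_add[OF assms(1)] assms(2) by simp
  moreover have "binom (2 * (int q - 1) - m) (int q - 1) = int ((q + c) choose (q - 1))"
    unfolding binom_def top bot using assms(3,4) by auto
  ultimately show ?thesis using False by (simp add: cong_0_iff)
qed

lemma II_term_cong:
  fixes p e q :: nat and m k j :: int
  assumes "prime p" "odd p" "q = p ^ e" "0 < m" "m \<le> int q - 1" "0 \<le> j"
    and "[2 * k - j = m] (mod (int q - 1))"
  shows "[2 ^ nat m * binom (2 * (int q - 1) - m) (int q - 1) * binom (int q - 1 - k) j * (-1) ^ nat j
          = (if m = int q - 1 then binom (int q - 1 - k) j else 0)] (mod int p)"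
proof (cases "m = int q - 1")
  case False
  then have "int p dvd binom (2 * (int q - 1) - m) (int q - 1)"
    using binom_double_pred_cong[OF assms(1,3-5)] by (simp add: cong_0_iff)
  then show ?thesis using False by (simp add: cong_0_iff)
next
  case True
  have "\<not> p dvd 2"
    using assms(1,2) primes_dvd_imp_eq[OF assms(1) two_is_prime_nat] by auto
  then have "[2 ^ (p ^ e - 1) = 1] (mod p)" by (rule fermat_theorem_prime_power[OF assms(1)])
  moreover have "nat m = p ^ e - 1" using True assms(3,4) by linarith
  ultimately have two: "[2 ^ nat m = 1] (mod int p)"
    by (simp add: cong_int_iff[symmetric])
  have "[2 * k - j = 0] (mod (int q - 1))" using assms(7) True by (simp add: cong_def)
  then have "(int q - 1) dvd (2 * k - j)" by (simp add: cong_0_iff)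
  moreover have "even (int q - 1)" using assms(2,3) by simp
  ultimately have "even (2 * k - j)" by (rule dvd_trans[rotated])
  then have sign: "(-1) ^ nat j = (1::int)" using assms(6) by (simp add: even_nat_iff)
  have "binom (2 * (int q - 1) - m) (int q - 1) = 1"
    using True assms(4) by (simp add: binom_def)
  then show ?thesis using True sign cong_mult[OF two cong_refl[of "binom (int q - 1 - k) j"]] by simp
qed

definition II_indices :: "int \<Rightarrow> int \<Rightarrow> (int \<times> int \<times> int \<times> int) set" where
  "II_indices qq N = {(\<alpha>, \<beta>, k, j).
     \<alpha> \<ge> 0 \<and> \<beta> \<ge> 0 \<and> \<beta> \<le> qq - 2 \<and> 0 < \<alpha> + \<beta> \<and> \<alpha> + \<beta> \<le> qq - 1 \<and>
     k \<ge> 1 \<and> j \<ge> 0 \<and> k + j \<le> qq - 1 \<and>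
     [2 * k - j = \<alpha> + \<beta>] (mod (qq - 1)) \<and>
     qq * (qq - 1) + k - j - (\<alpha> + \<beta> * qq) = N}"

definition closed_form_indices :: "int \<Rightarrow> int \<Rightarrow> int \<Rightarrow> (int \<times> int) set" where
  "closed_form_indices qq u v = {(s, \<alpha>). 0 \<le> s \<and> s \<le> 2 \<and>
     max 0 (real_of_int (v - s) + real_of_int (u + v) / real_of_int (qq - 1)) < real_of_int \<alpha> \<and>
     real_of_int \<alpha> \<le> min (real_of_int (qq - 1))
       (real_of_int (v - s) + real_of_int (u + v) / real_of_int (qq - 1) + 1)}"

definition closed_form_top :: "int \<Rightarrow> int \<Rightarrow> int \<Rightarrow> int \<Rightarrow> int \<Rightarrow> int" where
  "closed_form_top qq u v s \<alpha> = u + v - (s + \<alpha> - v - 1) * (qq - 1)"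

definition closed_form_bottom :: "int \<Rightarrow> int \<Rightarrow> int \<Rightarrow> int \<Rightarrow> int \<Rightarrow> int" where
  "closed_form_bottom qq u v s \<alpha> = (s + 2 * \<alpha> - 2 * v) * (qq - 1) - 2 * (u + v)"

lemma II_indices_diagonal_iff:
  "(\<alpha>, \<beta>, k, j) \<in> II_indices qq N \<and> \<alpha> + \<beta> = qq - 1 \<longleftrightarrow>
     1 \<le> \<alpha> \<and> \<alpha> \<le> qq - 1 \<and> \<beta> = qq - 1 - \<alpha> \<and> 1 \<le> k \<and> 0 \<le> j \<and> k + j \<le> qq - 1 \<and>
     (qq - 1) dvd (2 * k - j) \<and> \<alpha> * (qq - 1) + k - j = N"
proof (cases "\<beta> = qq - 1 - \<alpha>")
  case True
  have "qq * (qq - 1) + k - j - (\<alpha> + (qq - 1 - \<alpha>) * qq) = \<alpha> * (qq - 1) + k - j"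
    by (simp add: algebra_simps)
  moreover have "[2 * k - j = qq - 1] (mod (qq - 1)) \<longleftrightarrow> (qq - 1) dvd (2 * k - j)"
    by (simp add: cong_def dvd_eq_mod_eq_0)
  ultimately show ?thesis using True by (auto simp: II_indices_def)
qed auto

lemma closed_form_indices_iff:
  assumes "qq > 1"
  shows "(s, \<alpha>) \<in> closed_form_indices qq u v \<longleftrightarrow>
     0 \<le> s \<and> s \<le> 2 \<and> 0 < \<alpha> \<and> \<alpha> \<le> qq - 1 \<and>
     0 \<le> closed_form_top qq u v s \<alpha> \<and> closed_form_top qq u v s \<alpha> < qq - 1"
proof -
  have "real_of_int (v - s) + real_of_int (u + v) / real_of_int (qq - 1)
      = real_of_int (closed_form_top qq u v s \<alpha>) / real_of_int (qq - 1) + real_of_int \<alpha> - 1"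
    using assms by (simp add: closed_form_top_def field_simps)
  then show ?thesis
    using assms by (auto simp: closed_form_indices_def divide_less_eq_1_pos zero_le_divide_iff)
qed

lemma closed_form_coordinates:
  fixes qq u v s \<alpha> :: int
  shows "2 * (qq - 1 - closed_form_top qq u v s \<alpha>) - closed_form_bottom qq u v s \<alpha> = (qq - 1) * s"
    "\<alpha> * (qq - 1) + (qq - 1 - closed_form_top qq u v s \<alpha>) - closed_form_bottom qq u v s \<alpha> = u + v * qq"
  by (simp_all add: closed_form_top_def closed_form_bottom_def algebra_simps)

lemma sum_II_diagonal_reindex:
  fixes qq u v N :: int
  assumes "qq \<ge> 2" "N = u + v * qq"
  shows "(\<Sum>(\<alpha>, \<beta>, k, j) \<in> {(\<alpha>, \<beta>, k, j). (\<alpha>, \<beta>, k, j) \<in> II_indices qq N \<and> \<alpha> + \<beta> = qq - 1}.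
            binom (qq - 1 - k) j)
       = (\<Sum>(s, \<alpha>) \<in> {(s, \<alpha>). (s, \<alpha>) \<in> closed_form_indices qq u v \<and>
              0 \<le> closed_form_bottom qq u v s \<alpha> \<and>
              closed_form_bottom qq u v s \<alpha> \<le> closed_form_top qq u v s \<alpha>}.
            binom (closed_form_top qq u v s \<alpha>) (closed_form_bottom qq u v s \<alpha>))"
    (is "sum ?g ?D = sum ?h ?T")
proof -
  have Q: "qq - 1 > 0" using assms(1) by simp
  define to_closed_form where
    "to_closed_form = (\<lambda>(\<alpha>::int, \<beta>::int, k::int, j::int). ((2 * k - j) div (qq - 1), \<alpha>))"
  define to_II where "to_II = (\<lambda>(s, \<alpha>).
    (\<alpha>, qq - 1 - \<alpha>, qq - 1 - closed_form_top qq u v s \<alpha>, closed_form_bottom qq u v s \<alpha>))"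
  show ?thesis
  proof (rule sum.reindex_bij_witness[where i = to_II and j = to_closed_form])
    fix x assume "x \<in> ?D"
    then obtain \<alpha> \<beta> k j where x: "x = (\<alpha>, \<beta>, k, j)"
      and h: "1 \<le> \<alpha>" "\<alpha> \<le> qq - 1" "\<beta> = qq - 1 - \<alpha>" "1 \<le> k" "0 \<le> j" "k + j \<le> qq - 1"
        "(qq - 1) dvd (2 * k - j)" "\<alpha> * (qq - 1) + k - j = N"
      using II_indices_diagonal_iff by blast
    then obtain s where s: "2 * k - j = (qq - 1) * s" by blast
    have "(qq - 1) * (-1) < (qq - 1) * s" "(qq - 1) * s \<le> (qq - 1) * 2" using s h by simp_all
    then have "-1 < s" "s \<le> 2"
      using mult_less_cancel_left_pos[OF Q] mult_le_cancel_left_pos[OF Q] by blast+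
    moreover note coord = closed_form_coordinates[where qq = qq and u = u and v = v and s = s and \<alpha> = \<alpha>]
    moreover have top: "closed_form_top qq u v s \<alpha> = qq - 1 - k"
      using coord s h(8) assms(2) by (smt (verit))
    moreover have bot: "closed_form_bottom qq u v s \<alpha> = j"
      using coord s h(8) assms(2) by (smt (verit))
    moreover have "to_closed_form x = (s, \<alpha>)" using s Q by (simp add: to_closed_form_def x)
    ultimately show "to_II (to_closed_form x) = x" "to_closed_form x \<in> ?T" "?h (to_closed_form x) = ?g x"
      using h closed_form_indices_iff[of qq] assms(1) by (auto simp: to_II_def x)
  next
    fix y assume "y \<in> ?T"
    then obtain s \<alpha> where y: "y = (s, \<alpha>)" and h: "0 \<le> s" "s \<le> 2" "0 < \<alpha>" "\<alpha> \<le> qq - 1"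
        "0 \<le> closed_form_top qq u v s \<alpha>" "closed_form_top qq u v s \<alpha> < qq - 1"
        "0 \<le> closed_form_bottom qq u v s \<alpha>" "closed_form_bottom qq u v s \<alpha> \<le> closed_form_top qq u v s \<alpha>"
      using closed_form_indices_iff[of qq] assms(1) by auto
    note coord = closed_form_coordinates[where qq = qq and u = u and v = v and s = s and \<alpha> = \<alpha>]
    show "to_closed_form (to_II y) = y"
      using coord Q by (simp add: to_closed_form_def to_II_def y)
    show "to_II y \<in> ?D"
      using coord h assms(2) II_indices_diagonal_iff by (simp add: to_II_def y)
  qed
qed

lemma sum_II_diagonal_eq_closed_form:
  fixes qq u v N :: int
  assumes "qq \<ge> 2" "N = u + v * qq"
  shows "(\<Sum>(\<alpha>, \<beta>, k, j) \<in> II_indices qq N. if \<alpha> + \<beta> = qq - 1 then binom (qq - 1 - k) j else 0)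
       = (\<Sum>(s, \<alpha>) \<in> closed_form_indices qq u v.
            binom (closed_form_top qq u v s \<alpha>) (closed_form_bottom qq u v s \<alpha>))"
proof -
  have "finite (II_indices qq N)"
    by (rule finite_subset[of _ "{0..qq - 1} \<times> {0..qq - 1} \<times> {1..qq - 1} \<times> {0..qq - 1}"])
      (auto simp: II_indices_def)
  then have "(\<Sum>(\<alpha>, \<beta>, k, j) \<in> II_indices qq N. if \<alpha> + \<beta> = qq - 1 then binom (qq - 1 - k) j else 0)
      = (\<Sum>(\<alpha>, \<beta>, k, j) \<in> {(\<alpha>, \<beta>, k, j). (\<alpha>, \<beta>, k, j) \<in> II_indices qq N \<and> \<alpha> + \<beta> = qq - 1}.
            binom (qq - 1 - k) j)"
    by (rule sum.mono_neutral_cong_right) (auto split: if_splits)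
  also have "\<dots> = (\<Sum>(s, \<alpha>) \<in> {(s, \<alpha>). (s, \<alpha>) \<in> closed_form_indices qq u v \<and>
              0 \<le> closed_form_bottom qq u v s \<alpha> \<and>
              closed_form_bottom qq u v s \<alpha> \<le> closed_form_top qq u v s \<alpha>}.
            binom (closed_form_top qq u v s \<alpha>) (closed_form_bottom qq u v s \<alpha>))"
    using assms by (rule sum_II_diagonal_reindex)
  also have "\<dots> = (\<Sum>(s, \<alpha>) \<in> closed_form_indices qq u v.
            binom (closed_form_top qq u v s \<alpha>) (closed_form_bottom qq u v s \<alpha>))"
  proof (rule sum.mono_neutral_left)
    show "finite (closed_form_indices qq u v)"
      by (rule finite_subset[of _ "{0..2} \<times> {0..qq - 1}"])
        (use assms(1) closed_form_indices_iff[of qq] in auto)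
  qed (auto simp: binom_def split: if_splits)
  finally show ?thesis .
qed

lemma sum_II_cong_diagonal:
  fixes p e q :: nat and N :: int
  assumes "prime p" "odd p" "q = p ^ e"
  shows "[(\<Sum>(\<alpha>, \<beta>, k, j) \<in> II_indices (int q) N.
            2 ^ nat (\<alpha> + \<beta>) * binom (2 * (int q - 1) - \<alpha> - \<beta>) (int q - 1)
              * binom (int q - 1 - k) j * (-1) ^ nat j)
        = (\<Sum>(\<alpha>, \<beta>, k, j) \<in> II_indices (int q) N.
            if \<alpha> + \<beta> = int q - 1 then binom (int q - 1 - k) j else 0)] (mod int p)"
proof (rule cong_sum, clarify)
  fix \<alpha> \<beta> k j assume "(\<alpha>, \<beta>, k, j) \<in> II_indices (int q) N"
  then have "[2 ^ nat (\<alpha> + \<beta>) * binom (2 * (int q - 1) - (\<alpha> + \<beta>)) (int q - 1)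
              * binom (int q - 1 - k) j * (-1) ^ nat j
        = (if \<alpha> + \<beta> = int q - 1 then binom (int q - 1 - k) j else 0)] (mod int p)"
    by (intro II_term_cong[OF assms]) (auto simp: II_indices_def)
  then show "[2 ^ nat (\<alpha> + \<beta>) * binom (2 * (int q - 1) - \<alpha> - \<beta>) (int q - 1)
              * binom (int q - 1 - k) j * (-1) ^ nat j
        = (if \<alpha> + \<beta> = int q - 1 then binom (int q - 1 - k) j else 0)] (mod int p)"
    unfolding diff_diff_eq .
qed

theorem lemma4p2:
  fixes p e q n :: nat and u v :: int
  assumes "prime p" and "odd p" and "e \<ge> 1" and "q = p ^ e"
    and "1 \<le> n" and "n \<le> q^2 - 1"
    and "u = int (n mod q)" and "v = int (n div q)"
  shows "[(\<Sum>(\<alpha>, \<beta>, k, j) \<in> {(\<alpha>::int, \<beta>::int, k::int, j::int).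
              \<alpha> \<ge> 0 \<and> \<beta> \<ge> 0 \<and> \<beta> \<le> int q - 2 \<and> 0 < \<alpha> + \<beta> \<and> \<alpha> + \<beta> \<le> int q - 1 \<and>
              k \<ge> 1 \<and> j \<ge> 0 \<and> k + j \<le> int q - 1 \<and>
              [2 * k - j = \<alpha> + \<beta>] (mod (int q - 1)) \<and>
              int q * (int q - 1) + k - j - (\<alpha> + \<beta> * int q) = int n}.
            2 ^ nat (\<alpha> + \<beta>) * binom (2 * (int q - 1) - \<alpha> - \<beta>) (int q - 1)
              * binom (int q - 1 - k) j * (-1) ^ nat j)
         = (\<Sum>(s, \<alpha>) \<in> {(s::int, \<alpha>::int). 0 \<le> s \<and> s \<le> 2 \<and>
              max 0 (real_of_int (v - s) + real_of_int (u + v) / real_of_int (int q - 1))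
                < real_of_int \<alpha> \<and>
              real_of_int \<alpha> \<le> min (real_of_int (int q - 1))
                (real_of_int (v - s) + real_of_int (u + v) / real_of_int (int q - 1) + 1)}.
            binom (u + v - (s + \<alpha> - v - 1) * (int q - 1))
                  ((s + 2 * \<alpha> - 2 * v) * (int q - 1) - 2 * (u + v)))] (mod int p)"
proof -
  have "q \<ge> 2"
    using assms(3,4) self_le_power[of p e] prime_ge_2_nat[OF assms(1)] by simp
  have "int n = u + v * int q"
    using assms(7,8) by (metis mod_div_mult_eq of_nat_add of_nat_mult)
  then show ?thesis
    using sum_II_cong_diagonal[OF assms(1,2,4), of "int n"]
      sum_II_diagonal_eq_closed_form[of "int q" "int n" u v] \<open>q \<ge> 2\<close>
    unfolding II_indices_def closed_form_indices_def closed_form_top_def closed_form_bottom_def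
    by simp
qed

end
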